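(* Let $(X,d)$ be a complete $\mathrm{CAT}(0)$-space, $f:X\to\mathbb{R}$ a lower semi-continuous quasi-convex function, $x_0\in X$ and $(\tau_k)_{k\in\mathbb N}$ a sequence of positive numbers. Suppose a sequence $(x^k)_{k\ge0}$ exists with $x^0=x_0$ and $x^k\in\mathcal J^f_{\tau_k}(x^{k-1})$ for all $k\in\mathbb N$. Then: (i) $d(x^l,x^m)\le d(x^k,x^m)$ for all $0\le k<l<m$; (ii) setting $T_0:=0$, $T_k:=\tau_1+\dots+\tau_k$ and $\ell:=\lim_k T_k\in(0,\infty]$, the curve $\xi:[0,\ell)\to X$ defined by $\xi(t):=\gamma_{x^{k-1}x^k}\big((t-T_{k-1})/\tau_k\big)$ for $t\in[T_{k-1},T_k)$, $k\in\mathbb N$, is self-contracted.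
   Context: A metric space is geodesic if any two points $x,y$ are joined by a curve $\gamma:[0,1]\to X$ with $\gamma(0)=x$, $\gamma(1)=y$, $d(\gamma(s),\gamma(t))=|t-s|d(x,y)$ (a minimal geodesic). A geodesic metric space $(X,d)$ is a $\mathrm{CAT}(0)$-space if for all $x,y,z\in X$ and every minimal geodesic $\gamma$ from $y$ to $z$, $d^2(x,\gamma(s))\le(1-s)d^2(x,y)+sd^2(x,z)-(1-s)sd^2(y,z)$ for all $s\in[0,1]$; then minimal geodesics are unique, denoted $\gamma_{xy}$. $f$ is quasi-convex if $f(\gamma_{xy}(s))\le\max\{f(x),f(y)\}$ for all $x,y\in X$, $s\in(0,1)$. For $\tau>0$, $\mathcal J^f_\tau(x):=\{z\in X: f(z)+d^2(x,z)/(2\tau)=\inf_{w\in X}\{f(w)+d^2(x,w)/(2\tau)\}\}$. A map $\xi:[0,\ell)\to X$ is self-contracted if $d(\xi(t_2),\xi(t_3))\le d(\xi(t_1),\xi(t_3))$ for all $0\le t_1\le t_2\le t_3<\ell$. *)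

theory Defs
  imports "HOL-Analysis.Analysis"
begin

definition min_geodesic :: "(real \<Rightarrow> 'a::metric_space) \<Rightarrow> 'a \<Rightarrow> 'a \<Rightarrow> bool" where
  "min_geodesic \<gamma> x y \<longleftrightarrow> \<gamma> 0 = x \<and> \<gamma> 1 = y \<and>
     (\<forall>s\<in>{0..1}. \<forall>t\<in>{0..1}. dist (\<gamma> s) (\<gamma> t) = \<bar>t - s\<bar> * dist x y)"

definition geodesic_space :: "'a::metric_space itself \<Rightarrow> bool" where
  "geodesic_space _ \<longleftrightarrow> (\<forall>x y::'a. \<exists>\<gamma>. min_geodesic \<gamma> x y)"

definition CAT0 :: "'a::metric_space itself \<Rightarrow> bool" where
  "CAT0 T \<longleftrightarrow> geodesic_space T \<and>
     (\<forall>x y z::'a. \<forall>\<gamma>. min_geodesic \<gamma> y z \<longrightarrow> (\<forall>s\<in>{0..1}.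
        (dist x (\<gamma> s))\<^sup>2 \<le> (1 - s) * (dist x y)\<^sup>2 + s * (dist x z)\<^sup>2 - (1 - s) * s * (dist y z)\<^sup>2))"

text \<open>The (in a CAT(0) space unique) minimal geodesic from x to y.\<close>
definition geo :: "'a::metric_space \<Rightarrow> 'a \<Rightarrow> real \<Rightarrow> 'a" where
  "geo x y = (SOME \<gamma>. min_geodesic \<gamma> x y)"

definition quasi_convex :: "('a::metric_space \<Rightarrow> real) \<Rightarrow> bool" where
  "quasi_convex f \<longleftrightarrow> (\<forall>x y. \<forall>s\<in>{0<..<1}. f (geo x y s) \<le> max (f x) (f y))"

definition lsc :: "('a::topological_space \<Rightarrow> real) \<Rightarrow> bool" where
  "lsc f \<longleftrightarrow> (\<forall>x. \<forall>e>0. \<forall>\<^sub>F y in at x. f x - e < f y)"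

definition JJ :: "('a::metric_space \<Rightarrow> real) \<Rightarrow> real \<Rightarrow> 'a \<Rightarrow> 'a set" where
  "JJ f \<tau> x = {z. \<forall>w. f z + (dist x z)\<^sup>2 / (2 * \<tau>) \<le> f w + (dist x w)\<^sup>2 / (2 * \<tau>)}"

definition self_contracted :: "real set \<Rightarrow> (real \<Rightarrow> 'a::metric_space) \<Rightarrow> bool" where
  "self_contracted I \<xi> \<longleftrightarrow> (\<forall>t1\<in>I. \<forall>t2\<in>I. \<forall>t3\<in>I. t1 \<le> t2 \<and> t2 \<le> t3 \<longrightarrow>
      dist (\<xi> t2) (\<xi> t3) \<le> dist (\<xi> t1) (\<xi> t3))"

end

theory Submission
  imports Defs
begin

text \<open>If \<open>z\<close> minimises \<open>f + d(x,\<cdot>)\<^sup>2/(2\<tau>)\<close> and \<open>w\<close> lies in the sublevel set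
  \<open>{f \<le> f z}\<close>, then by quasi-convexity the whole geodesic from \<open>z\<close> to \<open>w\<close> stays in that sublevel set,
  so it cannot come closer to \<open>x\<close> than \<open>z\<close>. Combined with the CAT(0) inequality this forces the
  distance to \<open>w\<close> to be nonincreasing along the geodesic from \<open>x\<close> to \<open>z\<close>. Since \<open>f\<close> decreases
  along the proximal sequence, every later point of the polygonal curve lies in the sublevel set
  of every earlier vertex, and chaining the monotonicity over consecutive segments gives
  self-contractedness.\<close>

lemma min_geodesic_geo:
  assumes "CAT0 TYPE('a::metric_space)"
  shows "min_geodesic (geo x y) x (y::'a)"
proof -
  have "\<exists>\<gamma>. min_geodesic \<gamma> x y"
    using assms unfolding CAT0_def geodesic_space_def by blast
  then show ?thesis unfolding geo_def by (rule someI_ex)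
qed

lemma geo_0: "CAT0 TYPE('a::metric_space) \<Longrightarrow> geo x y 0 = (x::'a)"
  using min_geodesic_geo[of x y] by (simp add: min_geodesic_def)

lemma geo_1: "CAT0 TYPE('a::metric_space) \<Longrightarrow> geo x y 1 = (y::'a)"
  using min_geodesic_geo[of x y] by (simp add: min_geodesic_def)

lemma dist_geo:
  "CAT0 TYPE('a::metric_space) \<Longrightarrow> s \<in> {0..1} \<Longrightarrow> t \<in> {0..1} \<Longrightarrow>
     dist (geo x y s) (geo x y t) = \<bar>t - s\<bar> * dist x (y::'a)"
  using min_geodesic_geo[of x y] unfolding min_geodesic_def by blast

lemma CAT0_dist_geodesic:
  assumes "CAT0 TYPE('a::metric_space)" "min_geodesic \<gamma> y z" "s \<in> {0..1}"
  shows "(dist (x::'a) (\<gamma> s))\<^sup>2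
           \<le> (1 - s) * (dist x y)\<^sup>2 + s * (dist x z)\<^sup>2 - (1 - s) * s * (dist y z)\<^sup>2"
  using assms unfolding CAT0_def by blast

lemma min_geodesic_subsegment:
  assumes \<gamma>: "min_geodesic \<gamma> x y" and ab: "0 \<le> a" "a \<le> b" "b \<le> 1"
  shows "min_geodesic (\<lambda>r. \<gamma> (a + r * (b - a))) (\<gamma> a) (\<gamma> b)"
  unfolding min_geodesic_def
proof (intro conjI ballI)
  have inI: "a + r * (b - a) \<in> {0..1}" if "r \<in> {0..1}" for r
  proof -
    have "r * (b - a) \<le> 1 * (b - a)" using that ab by (intro mult_right_mono) auto
    then show ?thesis using that ab by auto
  qed
  have d\<gamma>: "dist (\<gamma> s) (\<gamma> t) = \<bar>t - s\<bar> * dist x y" if "s \<in> {0..1}" "t \<in> {0..1}" for s t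
    using \<gamma> that unfolding min_geodesic_def by blast
  fix r1 r2 :: real assume r: "r1 \<in> {0..1}" "r2 \<in> {0..1}"
  have "dist (\<gamma> (a + r1 * (b - a))) (\<gamma> (a + r2 * (b - a))) = \<bar>r2 - r1\<bar> * (b - a) * dist x y"
    using d\<gamma>[OF inI[OF r(1)] inI[OF r(2)]] ab by (simp add: abs_mult left_diff_distrib[symmetric])
  also have "\<dots> = \<bar>r2 - r1\<bar> * dist (\<gamma> a) (\<gamma> b)"
    using d\<gamma>[of a b] ab by simp
  finally show "dist (\<gamma> (a + r1 * (b - a))) (\<gamma> (a + r2 * (b - a))) = \<bar>r2 - r1\<bar> * dist (\<gamma> a) (\<gamma> b)" .
qed auto

lemma dist_geodesic_le_dist_start:
  assumes cat: "CAT0 TYPE('a::metric_space)" and \<gamma>: "min_geodesic \<gamma> q z"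
    and wz: "dist w z \<le> dist (w::'a) q" and r: "r \<in> {0..1}"
  shows "dist w (\<gamma> r) \<le> dist w q"
proof -
  have "(dist w (\<gamma> r))\<^sup>2 \<le> (1 - r) * (dist w q)\<^sup>2 + r * (dist w z)\<^sup>2 - (1 - r) * r * (dist q z)\<^sup>2"
    by (rule CAT0_dist_geodesic[OF cat \<gamma> r])
  also have "\<dots> \<le> (1 - r) * (dist w q)\<^sup>2 + r * (dist w q)\<^sup>2"
  proof -
    have "r * (dist w z)\<^sup>2 \<le> r * (dist w q)\<^sup>2" using r wz by (intro mult_left_mono power_mono) auto
    moreover have "0 \<le> (1 - r) * r * (dist q z)\<^sup>2" using r by auto
    ultimately show ?thesis by linarith
  qed
  also have "\<dots> = (dist w q)\<^sup>2" by (simp add: algebra_simps)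
  finally show ?thesis by (rule power2_le_imp_le) simp
qed

lemma JJ_dist_le:
  assumes "z \<in> JJ f \<tau> x" "\<tau> > 0" "f p \<le> f z"
  shows "dist x z \<le> dist x p"
proof -
  have "f z + (dist x z)\<^sup>2 / (2 * \<tau>) \<le> f p + (dist x p)\<^sup>2 / (2 * \<tau>)"
    using assms(1) unfolding JJ_def by blast
  then have "(dist x z)\<^sup>2 / (2 * \<tau>) \<le> (dist x p)\<^sup>2 / (2 * \<tau>)" using assms(3) by simp
  then have "(dist x z)\<^sup>2 \<le> (dist x p)\<^sup>2" using assms(2) by (simp add: divide_le_cancel)
  then show ?thesis by (rule power2_le_imp_le) simp
qed

lemma JJ_f_le:
  assumes "z \<in> JJ f \<tau> x" "\<tau> > 0"
  shows "f z \<le> f x"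
proof -
  have "f z + (dist x z)\<^sup>2 / (2 * \<tau>) \<le> f x + (dist x x)\<^sup>2 / (2 * \<tau>)"
    using assms(1) unfolding JJ_def by blast
  moreover have "0 \<le> (dist x z)\<^sup>2 / (2 * \<tau>)" using assms(2) by simp
  ultimately show ?thesis by simp
qed

lemma JJ_dist_le_dist_geo:
  fixes f :: "'a::metric_space \<Rightarrow> real"
  assumes cat: "CAT0 TYPE('a)" and qc: "quasi_convex f" and \<tau>: "\<tau> > 0"
    and z: "z \<in> JJ f \<tau> x" and fw: "f w \<le> f z" and v: "v \<in> {0..1}"
  shows "dist w z \<le> dist w (geo x z v)"
proof -
  define q where "q = geo x z v"
  define a where "a = dist q z"
  define b where "b = dist q w"
  define c where "c = dist z w"
  have xq: "dist x q = v * dist x z"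
    using dist_geo[OF cat, of 0 v x z] geo_0[OF cat, of x z] v by (simp add: q_def)
  have qz: "a = (1 - v) * dist x z"
    using dist_geo[OF cat, of v 1 x z] geo_1[OF cat, of x z] v by (simp add: a_def q_def)
  have shrink: "(1 - u) * c\<^sup>2 \<le> b\<^sup>2 - a\<^sup>2" if u: "0 < u" "u < 1" for u
  proof -
    define p where "p = geo z w u"
    have "f p \<le> max (f z) (f w)" using qc u unfolding quasi_convex_def p_def by auto
    then have "dist x z \<le> dist x p" using JJ_dist_le[OF z \<tau>] fw by simp
    also have "dist x p \<le> dist x q + dist q p" by (rule dist_triangle)
    finally have "a \<le> dist q p" using xq qz by (simp add: algebra_simps)
    then have "a\<^sup>2 \<le> (dist q p)\<^sup>2" by (simp add: a_def power_mono)
    also have "\<dots> \<le> (1 - u) * a\<^sup>2 + u * b\<^sup>2 - (1 - u) * u * c\<^sup>2"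
      using CAT0_dist_geodesic[OF cat min_geodesic_geo[OF cat, of z w], of u q] u
      by (simp add: p_def a_def b_def c_def)
    finally have "u * ((1 - u) * c\<^sup>2) \<le> u * (b\<^sup>2 - a\<^sup>2)" by (simp add: algebra_simps)
    then show ?thesis using u by simp
  qed
  have "c\<^sup>2 \<le> b\<^sup>2 - a\<^sup>2"
  proof (rule field_le_mult_one_interval)
    fix y :: real assume "0 < y" "y < 1"
    then show "y * c\<^sup>2 \<le> b\<^sup>2 - a\<^sup>2" using shrink[of "1 - y"] by simp
  qed
  then have "c\<^sup>2 \<le> b\<^sup>2" using zero_le_power2[of a] by linarith
  then have "c \<le> b" by (rule power2_le_imp_le) (simp add: b_def)
  then show ?thesis by (simp add: b_def c_def q_def dist_commute)
qed

lemma JJ_dist_geo_antimono: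
  fixes f :: "'a::metric_space \<Rightarrow> real"
  assumes cat: "CAT0 TYPE('a)" and qc: "quasi_convex f" and \<tau>: "\<tau> > 0"
    and z: "z \<in> JJ f \<tau> x" and fw: "f w \<le> f z" and s: "0 \<le> s" "s \<le> s'" "s' \<le> 1"
  shows "dist w (geo x z s') \<le> dist w (geo x z s)"
proof (cases "s = 1")
  case False
  define r where "r = (s' - s) / (1 - s)"
  have r: "r \<in> {0..1}" using s False by (auto simp: r_def field_simps)
  have "geo x z s' = geo x z (s + r * (1 - s))" using False by (simp add: r_def)
  also have "dist w \<dots> \<le> dist w (geo x z s)"
  proof (rule dist_geodesic_le_dist_start[OF cat _ _ r])
    show "min_geodesic (\<lambda>r. geo x z (s + r * (1 - s))) (geo x z s) z"
      using min_geodesic_subsegment[OF min_geodesic_geo[OF cat], of s 1 x z] s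
      by (simp add: geo_1[OF cat])
    show "dist w z \<le> dist w (geo x z s)"
      by (rule JJ_dist_le_dist_geo[OF cat qc \<tau> z fw]) (use s in auto)
  qed
  finally show ?thesis .
qed (use s in simp)

lemma exists_interval_index:
  fixes T :: "nat \<Rightarrow> 'b::linorder"
  assumes "T 0 \<le> t" "t < T n"
  shows "\<exists>k\<ge>1. T (k - 1) \<le> t \<and> t < T k"
proof -
  define k where "k = (LEAST k. t < T k)"
  have k: "t < T k" unfolding k_def using assms(2) by (rule LeastI)
  then have "k \<noteq> 0" using assms(1) by (metis leD)
  moreover have "\<not> t < T (k - 1)" unfolding k_def
    by (rule not_less_Least) (use \<open>k \<noteq> 0\<close> k_def in simp)
  ultimately show ?thesis using k by (intro exI[of _ k]) auto
qed

lemma interval_index_mono: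
  fixes T :: "nat \<Rightarrow> 'b::linorder"
  assumes "mono T" "T (k - 1) \<le> t" "t \<le> t'" "t' < T k'"
  shows "k \<le> k'"
proof (rule ccontr)
  assume "\<not> k \<le> k'"
  then have "T k' \<le> T (k - 1)" using \<open>mono T\<close> by (simp add: monoD)
  then show False using assms(2-4) by simp
qed

lemma less_lim_incseq_imp_less:
  fixes X :: "nat \<Rightarrow> real"
  assumes "incseq X" "ereal t < lim (\<lambda>k. ereal (X k))"
  shows "\<exists>k. t < X k"
proof -
  have "incseq (\<lambda>k. ereal (X k))" using assms(1) by (simp add: incseq_def)
  then have "lim (\<lambda>k. ereal (X k)) = (SUP k. ereal (X k))" by (intro limI LIMSEQ_SUP)
  then show ?thesis using assms(2) by (simp add: less_SUP_iff)
qed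

lemma self_contracted_subset: "I \<subseteq> J \<Longrightarrow> self_contracted J \<xi> \<Longrightarrow> self_contracted I \<xi>"
  unfolding self_contracted_def by blast

locale proximal_sequence =
  fixes f :: "'a::metric_space \<Rightarrow> real" and \<tau> :: "nat \<Rightarrow> real" and x :: "nat \<Rightarrow> 'a"
  assumes CAT0: "CAT0 TYPE('a)" and quasi_convex: "quasi_convex f"
    and \<tau>_pos: "\<And>k. k \<ge> 1 \<Longrightarrow> \<tau> k > 0"
    and x_JJ: "\<And>k. k \<ge> 1 \<Longrightarrow> x k \<in> JJ f (\<tau> k) (x (k - 1))"
begin

definition seg :: "nat \<Rightarrow> real \<Rightarrow> 'a" where
  "seg k = geo (x (k - 1)) (x k)"

lemma seg_0: "seg k 0 = x (k - 1)"
  by (simp add: seg_def geo_0[OF CAT0])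

lemma seg_1: "seg k 1 = x k"
  by (simp add: seg_def geo_1[OF CAT0])

lemma dist_seg: "s \<in> {0..1} \<Longrightarrow> t \<in> {0..1} \<Longrightarrow>
    dist (seg k s) (seg k t) = \<bar>t - s\<bar> * dist (x (k - 1)) (x k)"
  unfolding seg_def by (rule dist_geo[OF CAT0])

lemma f_antimono: "i \<le> j \<Longrightarrow> f (x j) \<le> f (x i)"
proof (induction j rule: dec_induct)
  case (step j)
  then show ?case using JJ_f_le[OF x_JJ \<tau>_pos, of "Suc j"] by simp
qed simp

lemma f_seg_le:
  assumes "1 \<le> k" "s \<in> {0..1}"
  shows "f (seg k s) \<le> f (x (k - 1))"
proof -
  have "f (seg k s) \<le> max (f (x (k - 1))) (f (x k))"
    using quasi_convex assms(2) unfolding quasi_convex_def seg_def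
    by (cases "s = 0 \<or> s = 1") (auto simp: geo_0[OF CAT0] geo_1[OF CAT0])
  then show ?thesis using f_antimono[of "k - 1" k] by simp
qed

lemma dist_seg_antimono:
  assumes "1 \<le> k" "f w \<le> f (x k)" "0 \<le> s" "s \<le> s'" "s' \<le> 1"
  shows "dist w (seg k s') \<le> dist w (seg k s)"
  unfolding seg_def
  by (rule JJ_dist_geo_antimono[OF CAT0 quasi_convex \<tau>_pos x_JJ]) (use assms in auto)

lemma dist_seg_chain:
  assumes "f w \<le> f (x n)" "1 \<le> i" "i \<le> j" "j \<le> n" "s \<in> {0..1}" "s' \<in> {0..1}"
    and "i < j \<or> s \<le> s'"
  shows "dist w (seg j s') \<le> dist w (seg i s)"
  using assms(3-)
proof (induction j arbitrary: s')
  case (Suc j)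
  have mono: "dist w (seg (Suc j) b) \<le> dist w (seg (Suc j) a)" if "0 \<le> a" "a \<le> b" "b \<le> 1" for a b
    using dist_seg_antimono[OF _ _ that] assms(1) f_antimono[of "Suc j" n] Suc.prems by simp
  show ?case
  proof (cases "i = Suc j")
    case True
    then show ?thesis using mono[of s s'] Suc.prems by simp
  next
    case False
    have "dist w (seg (Suc j) s') \<le> dist w (seg (Suc j) 0)" using mono[of 0 s'] Suc.prems by simp
    also have "\<dots> = dist w (seg j 1)" by (simp add: seg_0 seg_1)
    also have "\<dots> \<le> dist w (seg i s)" by (rule Suc.IH) (use Suc.prems False in simp_all)
    finally show ?thesis .
  qed
qed (use assms(2) in simp)

lemma dist_self_contracted:
  assumes "k < l" "l < m"
  shows "dist (x l) (x m) \<le> dist (x k) (x m)"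
proof -
  have "dist (x m) (seg l 1) \<le> dist (x m) (seg (Suc k) 0)"
    by (rule dist_seg_chain[of "x m" m]) (use assms in auto)
  then show ?thesis by (simp add: seg_0 seg_1 dist_commute)
qed

lemma dist_seg_self_contracted:
  assumes k: "1 \<le> k1" "k1 \<le> k2" "k2 \<le> k3"
    and s: "s1 \<in> {0..1}" "s2 \<in> {0..1}" "s3 \<in> {0..1}"
    and s12: "k1 = k2 \<Longrightarrow> s1 \<le> s2" and s23: "k2 = k3 \<Longrightarrow> s2 \<le> s3"
  shows "dist (seg k2 s2) (seg k3 s3) \<le> dist (seg k1 s1) (seg k3 s3)"
proof -
  define w where "w = seg k3 s3"
  have fw: "f w \<le> f (x (k3 - 1))" unfolding w_def using f_seg_le k s by simp
  show ?thesis
  proof (cases "k2 < k3")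
    case True
    have "dist w (seg k2 s2) \<le> dist w (seg k1 s1)"
      by (rule dist_seg_chain[OF fw]) (use True k s s12 in fastforce)+
    then show ?thesis by (simp add: w_def dist_commute)
  next
    case False
    then have k23: "k2 = k3" using k by simp
    have d23: "dist (seg k2 s2) w = (s3 - s2) * dist (x (k3 - 1)) (x k3)"
      using dist_seg[OF s(2,3)] s23 k23 by (simp add: w_def)
    show ?thesis
    proof (cases "k1 = k3")
      case True
      have "(s3 - s2) * dist (x (k3 - 1)) (x k3) \<le> (s3 - s1) * dist (x (k3 - 1)) (x k3)"
        using s12 k23 True by (intro mult_right_mono) simp_all
      also have "\<dots> = dist (seg k1 s1) w"
        using dist_seg[OF s(1,3)] s12 s23 k23 True by (simp add: w_def)
      finally show ?thesis using d23 by (simp add: w_def)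
    next
      case False
      have "(s3 - s2) * dist (x (k3 - 1)) (x k3) \<le> (s3 - 0) * dist (x (k3 - 1)) (x k3)"
        using s by (intro mult_right_mono) simp_all
      also have "\<dots> = dist w (seg (k3 - 1) 1)"
        using dist_seg[of 0 s3 k3] s by (simp add: w_def seg_0 seg_1 dist_commute)
      also have "\<dots> \<le> dist w (seg k1 s1)"
        by (rule dist_seg_chain[OF fw]) (use k k23 False s in simp_all)
      finally show ?thesis using d23 by (simp add: w_def dist_commute)
    qed
  qed
qed

lemma mono_partial_sums: "mono (\<lambda>k. \<Sum>i=1..k. \<tau> i)"
  unfolding mono_iff_le_Suc using \<tau>_pos by (simp add: less_imp_le)

lemma self_contracted_curve:
  assumes T: "\<And>k. T k = (\<Sum>i=1..k. \<tau> i)"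
    and \<xi>: "\<And>t k. k \<ge> 1 \<Longrightarrow> T (k - 1) \<le> t \<Longrightarrow> t < T k \<Longrightarrow> \<xi> t = seg k ((t - T (k - 1)) / \<tau> k)"
  shows "self_contracted {t. 0 \<le> t \<and> (\<exists>n. t < T n)} \<xi>"
proof -
  have mono: "mono T" using mono_partial_sums T by presburger
  have param: "\<xi> t = seg k ((t - T (k - 1)) / \<tau> k) \<and> (t - T (k - 1)) / \<tau> k \<in> {0..1}"
    if k: "1 \<le> k" "T (k - 1) \<le> t" "t < T k" for k t
  proof -
    have "T k = T (k - 1) + \<tau> k" using T[of k] T[of "k - 1"] k(1) by (cases k) simp_all
    then show ?thesis using \<xi>[OF k] k \<tau>_pos[OF k(1)] by (simp add: field_simps)
  qed
  have index: "\<exists>k\<ge>1. T (k - 1) \<le> t \<and> t < T k" if "t \<in> {t. 0 \<le> t \<and> (\<exists>n. t < T n)}" for t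
    using exists_interval_index[of T t] that T[of 0] by auto
  show ?thesis unfolding self_contracted_def
  proof (intro ballI impI)
    fix t1 t2 t3 assume t: "t1 \<in> {t. 0 \<le> t \<and> (\<exists>n. t < T n)}" "t2 \<in> {t. 0 \<le> t \<and> (\<exists>n. t < T n)}"
      "t3 \<in> {t. 0 \<le> t \<and> (\<exists>n. t < T n)}" and le: "t1 \<le> t2 \<and> t2 \<le> t3"
    obtain k1 where k1: "1 \<le> k1" "T (k1 - 1) \<le> t1" "t1 < T k1" using index[OF t(1)] by blast
    obtain k2 where k2: "1 \<le> k2" "T (k2 - 1) \<le> t2" "t2 < T k2" using index[OF t(2)] by blast
    obtain k3 where k3: "1 \<le> k3" "T (k3 - 1) \<le> t3" "t3 < T k3" using index[OF t(3)] by blast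
    define s1 where "s1 = (t1 - T (k1 - 1)) / \<tau> k1"
    define s2 where "s2 = (t2 - T (k2 - 1)) / \<tau> k2"
    define s3 where "s3 = (t3 - T (k3 - 1)) / \<tau> k3"
    have "dist (seg k2 s2) (seg k3 s3) \<le> dist (seg k1 s1) (seg k3 s3)"
    proof (rule dist_seg_self_contracted)
      show "1 \<le> k1" by (fact k1(1))
      show "k1 \<le> k2" "k2 \<le> k3" using interval_index_mono[OF mono] k1 k2 k3 le by blast+
      show "s1 \<in> {0..1}" "s2 \<in> {0..1}" "s3 \<in> {0..1}"
        using param[OF k1] param[OF k2] param[OF k3] s1_def s2_def s3_def by simp_all
      show "s1 \<le> s2" if "k1 = k2"
        using that le \<tau>_pos[OF k1(1)] by (simp add: s1_def s2_def s3_def divide_right_mono)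
      show "s2 \<le> s3" if "k2 = k3"
        using that le \<tau>_pos[OF k2(1)] by (simp add: s1_def s2_def s3_def divide_right_mono)
    qed
    then show "dist (\<xi> t2) (\<xi> t3) \<le> dist (\<xi> t1) (\<xi> t3)"
      using param[OF k1] param[OF k2] param[OF k3] by (simp add: s1_def s2_def s3_def)
  qed
qed

end

theorem mainTheorem12:
  fixes f :: "'a::{metric_space, complete_space} \<Rightarrow> real"
    and x0 :: 'a and \<tau> :: "nat \<Rightarrow> real" and x :: "nat \<Rightarrow> 'a"
    and T :: "nat \<Rightarrow> real" and L :: ereal and \<xi> :: "real \<Rightarrow> 'a"
  assumes "CAT0 TYPE('a)"
    and "lsc f"
    and "quasi_convex f"
    and "\<And>k. k \<ge> 1 \<Longrightarrow> \<tau> k > 0"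
    and "x 0 = x0"
    and "\<And>k. k \<ge> 1 \<Longrightarrow> x k \<in> JJ f (\<tau> k) (x (k - 1))"
    and "\<And>k. T k = (\<Sum>i=1..k. \<tau> i)"
    and "L = lim (\<lambda>k. ereal (T k))"
    and "\<And>t k. k \<ge> 1 \<Longrightarrow> T (k - 1) \<le> t \<Longrightarrow> t < T k \<Longrightarrow>
           \<xi> t = geo (x (k - 1)) (x k) ((t - T (k - 1)) / \<tau> k)"
  shows "(\<forall>k l m. k < l \<and> l < m \<longrightarrow> dist (x l) (x m) \<le> dist (x k) (x m))
       \<and> self_contracted {t. 0 \<le> t \<and> ereal t < L} \<xi>"
proof -
  \<comment> \<open>Completeness and lower semicontinuity only serve the existence of the sequence.\<close>
  interpret proximal_sequence f \<tau> x
    using assms(1,3,4,6) by unfold_locales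
  have "incseq T" using mono_partial_sums assms(7) by presburger
  then have "{t. 0 \<le> t \<and> ereal t < L} \<subseteq> {t. 0 \<le> t \<and> (\<exists>n. t < T n)}"
    using less_lim_incseq_imp_less assms(8) by blast
  moreover have "self_contracted {t. 0 \<le> t \<and> (\<exists>n. t < T n)} \<xi>"
    by (rule self_contracted_curve[OF assms(7)]) (simp add: assms(9) seg_def)
  ultimately show ?thesis
    using dist_self_contracted self_contracted_subset by blast
qed

end
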